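(* Let $f\in\mathcal{B}^\Sigma_{d,n}$, $b\in\mathcal{B}^\Sigma_{d,m}$ and $a\in\mathcal{B}^\Sigma_{e,n+m}$, and write $\Delta(a)=\sum a^{(1)}\otimes a^{(2)}$. Then $a*(b\cdot f)=\sum (a^{(1)}*b)\cdot(a^{(2)}*f)$, i.e. $a*(b\cdot f)$ is the image of $\Delta(a)*(b\otimes f)\in\mathcal{B}^\Sigma\otimes\mathcal{B}^\Sigma$ under the multiplication map $u\otimes v\mapsto u\cdot v$.
   Context: Let $\mathbf{k}$ be a field of characteristic $0$ and $B=\bigoplus_{d\ge0}B_d$ a commutative graded $\mathbf{k}$-algebra with $B_0=\mathbf{k}$, generated by $B_1$, $\dim B_1<\infty$. $\mathcal{B}^\Sigma_{d,n}=(B_d^{\otimes n})^{\Sigma_n}$ ($\Sigma_n$ permuting factors), $\mathcal{B}^\Sigma=\bigoplus_{n,d}\mathcal{B}^\Sigma_{d,n}$. For $f\in\mathcal{B}^\Sigma_{d,n}$, $g\in\mathcal{B}^\Sigma_{d,m}$, $f\cdot g=\sum_\sigma f\cdot_\sigma g$ where $\sigma$ ranges over subsets $\{i_1<\cdots<i_n\}\subseteq[n+m]$ and $f\cdot_\sigma g$ places the factors of $f$ in positions $i_1,\dots,i_n$ and those of $g$ in the remaining positions in order; $\cdot$ is zero between different $d$. $*:\mathcal{B}^\Sigma_{d,n}\otimes\mathcal{B}^\Sigma_{e,n}\to\mathcal{B}^\Sigma_{d+e,n}$ is factorwise multiplication in $B$, zero for different $n$. $\Delta:\mathcal{B}^\Sigma\to\mathcal{B}^\Sigma\otimes\mathcal{B}^\Sigma$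 is the unique $\cdot$-algebra homomorphism with $\Delta(w)=1\otimes w+w\otimes1$ for $w\in B_d=\mathcal{B}^\Sigma_{d,1}$ (each $\bigoplus_n\mathcal{B}^\Sigma_{d,n}$ being a free divided power algebra on $B_d$). $*$ is extended componentwise to $\mathcal{B}^\Sigma\otimes\mathcal{B}^\Sigma$: $(a'\otimes a'')*(b\otimes f)=(a'*b)\otimes(a''*f)$. *)

theory Defs
  imports Main "HOL-Combinatorics.Permutations"
begin

text \<open>B is modelled as a commutative ring type 'b together with a scalar
action smul of the field 'k (characteristic 0) and the family of homogeneous
components Bd :: nat => 'b set.\<close>

inductive_set kspan :: "('k \<Rightarrow> 'b::comm_ring_1 \<Rightarrow> 'b) \<Rightarrow> 'b set \<Rightarrow> 'b set"
  for smul S where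
  kspan_zero: "0 \<in> kspan smul S"
| kspan_base: "x \<in> S \<Longrightarrow> x \<in> kspan smul S"
| kspan_add: "x \<in> kspan smul S \<Longrightarrow> y \<in> kspan smul S \<Longrightarrow> x + y \<in> kspan smul S"
| kspan_smul: "x \<in> kspan smul S \<Longrightarrow> smul c x \<in> kspan smul S"

inductive_set subalg :: "('k \<Rightarrow> 'b::comm_ring_1 \<Rightarrow> 'b) \<Rightarrow> 'b set \<Rightarrow> 'b set"
  for smul S where
  subalg_scalar: "smul c 1 \<in> subalg smul S"
| subalg_base: "x \<in> S \<Longrightarrow> x \<in> subalg smul S"
| subalg_add: "x \<in> subalg smul S \<Longrightarrow> y \<in> subalg smul S \<Longrightarrow> x + y \<in> subalg smul S"
| subalg_mult: "x \<in> subalg smul S \<Longrightarrow> y \<in> subalg smul S \<Longrightarrow> x * y \<in> subalg smul S"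
| subalg_smul: "x \<in> subalg smul S \<Longrightarrow> smul c x \<in> subalg smul S"

definition graded_alg :: "('k::field_char_0 \<Rightarrow> 'b::comm_ring_1 \<Rightarrow> 'b) \<Rightarrow> (nat \<Rightarrow> 'b set) \<Rightarrow> bool" where
  "graded_alg smul Bd \<longleftrightarrow>
     \<comment> \<open>k-algebra structure\<close>
     (\<forall>c x y. smul c (x + y) = smul c x + smul c y) \<and>
     (\<forall>c c' x. smul (c + c') x = smul c x + smul c' x) \<and>
     (\<forall>c c' x. smul (c * c') x = smul c (smul c' x)) \<and>
     (\<forall>x. smul 1 x = x) \<and>
     (\<forall>c x y. smul c (x * y) = smul c x * y) \<and>
     \<comment> \<open>each B_i is a k-subspace\<close>
     (\<forall>i. 0 \<in> Bd i \<and> (\<forall>x\<in>Bd i. \<forall>y\<in>Bd i. x + y \<in> Bd i) \<and> (\<forall>c. \<forall>x\<in>Bd i. smul c x \<in> Bd i)) \<and>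
     \<comment> \<open>grading is multiplicative\<close>
     (\<forall>i j. \<forall>x\<in>Bd i. \<forall>y\<in>Bd j. x * y \<in> Bd (i + j)) \<and>
     \<comment> \<open>B is the direct sum of the B_i\<close>
     (\<forall>x. \<exists>N xs. (\<forall>i<N. xs i \<in> Bd i) \<and> x = (\<Sum>i<N. xs i)) \<and>
     (\<forall>N xs. (\<forall>i<N. xs i \<in> Bd i) \<and> (\<Sum>i<N. xs i) = 0 \<longrightarrow> (\<forall>i<N. xs i = 0)) \<and>
     \<comment> \<open>B_0 = k\<close>
     Bd 0 = range (\<lambda>c. smul c 1) \<and> (1::'b) \<noteq> 0 \<and>
     \<comment> \<open>B is generated by B_1, and B_1 is finite-dimensional\<close>
     subalg smul (Bd 1) = UNIV \<and>
     (\<exists>F. finite F \<and> F \<subseteq> Bd 1 \<and> Bd 1 \<subseteq> kspan smul F)"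

text \<open>An element of a tensor power is represented as a formal linear
combination of pure tensors: a list of pairs (coefficient, word), the word
[x_1,...,x_n] standing for x_1 (x) ... (x) x_n.  Elements of the tensor
product of two such spaces are lists of triples (coefficient, word, word).\<close>

type_synonym ('k, 'b) tens = "('k \<times> 'b list) list"
type_synonym ('k, 'b) tens2 = "('k \<times> 'b list \<times> 'b list) list"

definition tens_in :: "(nat \<Rightarrow> 'b set) \<Rightarrow> nat \<Rightarrow> nat \<Rightarrow> ('k, 'b) tens \<Rightarrow> bool" where
  "tens_in Bd d n t \<longleftrightarrow> (\<forall>(c, w)\<in>set t. length w = n \<and> set w \<subseteq> Bd d)"

definition tens2_in :: "(nat \<Rightarrow> 'b set) \<Rightarrow> nat \<Rightarrow> ('k, 'b) tens2 \<Rightarrow> bool" where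
  "tens2_in Bd d x \<longleftrightarrow> (\<forall>(c, u, v)\<in>set x. set u \<subseteq> Bd d \<and> set v \<subseteq> Bd d)"

definition lin_fun :: "('k::field \<Rightarrow> 'b::comm_ring_1 \<Rightarrow> 'b) \<Rightarrow> (nat \<Rightarrow> 'b set) \<Rightarrow> nat \<Rightarrow> ('b \<Rightarrow> 'k) \<Rightarrow> bool" where
  "lin_fun smul Bd d \<phi> \<longleftrightarrow>
     (\<forall>x\<in>Bd d. \<forall>y\<in>Bd d. \<phi> (x + y) = \<phi> x + \<phi> y) \<and> (\<forall>c. \<forall>x\<in>Bd d. \<phi> (smul c x) = c * \<phi> x)"

definition tens_eval :: "(nat \<Rightarrow> 'b \<Rightarrow> 'k::field) \<Rightarrow> ('k, 'b) tens \<Rightarrow> 'k" where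
  "tens_eval \<phi>s t = sum_list (map (\<lambda>(c, w). c * (\<Prod>i<length w. \<phi>s i (w ! i))) t)"

text \<open>Equality in B_d^{(x) n}: two formal combinations represent the same
tensor iff they agree under all products of linear functionals
(these separate points of a tensor product of vector spaces).\<close>
definition teq :: "('k::field \<Rightarrow> 'b::comm_ring_1 \<Rightarrow> 'b) \<Rightarrow> (nat \<Rightarrow> 'b set) \<Rightarrow> nat \<Rightarrow> nat
                    \<Rightarrow> ('k, 'b) tens \<Rightarrow> ('k, 'b) tens \<Rightarrow> bool" where
  "teq smul Bd d n t t' \<longleftrightarrow> tens_in Bd d n t \<and> tens_in Bd d n t' \<and>
     (\<forall>\<phi>s. (\<forall>i<n. lin_fun smul Bd d (\<phi>s i)) \<longrightarrow> tens_eval \<phi>s t = tens_eval \<phi>s t')"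

text \<open>Equality in the tensor product of (direct sums of) tensor powers of
B_d: componentwise in each bidegree (p,q), the (p,q) component being
identified with B_d^{(x)(p+q)}.\<close>
definition tens2_eval :: "nat \<Rightarrow> nat \<Rightarrow> (nat \<Rightarrow> 'b \<Rightarrow> 'k::field) \<Rightarrow> ('k, 'b) tens2 \<Rightarrow> 'k" where
  "tens2_eval p q \<phi>s x = sum_list (map (\<lambda>(c, u, v).
       if length u = p \<and> length v = q then c * (\<Prod>i<p + q. \<phi>s i ((u @ v) ! i)) else 0) x)"

definition teq2 :: "('k::field \<Rightarrow> 'b::comm_ring_1 \<Rightarrow> 'b) \<Rightarrow> (nat \<Rightarrow> 'b set) \<Rightarrow> nat
                    \<Rightarrow> ('k, 'b) tens2 \<Rightarrow> ('k, 'b) tens2 \<Rightarrow> bool" where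
  "teq2 smul Bd d x y \<longleftrightarrow> tens2_in Bd d x \<and> tens2_in Bd d y \<and>
     (\<forall>p q \<phi>s. (\<forall>i<p + q. lin_fun smul Bd d (\<phi>s i)) \<longrightarrow> tens2_eval p q \<phi>s x = tens2_eval p q \<phi>s y)"

definition perm_t :: "(nat \<Rightarrow> nat) \<Rightarrow> ('k, 'b) tens \<Rightarrow> ('k, 'b) tens" where
  "perm_t \<sigma> t = map (\<lambda>(c, w). (c, map (\<lambda>i. w ! \<sigma> i) [0..<length w])) t"

definition Sym :: "('k::field \<Rightarrow> 'b::comm_ring_1 \<Rightarrow> 'b) \<Rightarrow> (nat \<Rightarrow> 'b set) \<Rightarrow> nat \<Rightarrow> nat \<Rightarrow> ('k, 'b) tens set" where
  "Sym smul Bd d n = {t. tens_in Bd d n t \<and>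
      (\<forall>\<sigma>. \<sigma> permutes {..<n} \<longrightarrow> teq smul Bd d n (perm_t \<sigma> t) t)}"

text \<open>merge bs u v: bs is the indicator of a subset of positions; the
factors of u are put (in order) at the True positions, those of v at the
False positions.\<close>
fun merge :: "bool list \<Rightarrow> 'b list \<Rightarrow> 'b list \<Rightarrow> 'b list" where
  "merge [] xs ys = []"
| "merge (True # bs) (x # xs) ys = x # merge bs xs ys"
| "merge (True # bs) [] ys = []"
| "merge (False # bs) xs (y # ys) = y # merge bs xs ys"
| "merge (False # bs) xs [] = []"

definition sel :: "nat \<Rightarrow> nat \<Rightarrow> bool list list" where
  "sel n m = filter (\<lambda>bs. count_list bs True = n) (List.n_lists (n + m) [True, False])"

text \<open>The shuffle product f . g = sum over sigma of f ._sigma g.\<close>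
definition shuf :: "('k::times, 'b) tens \<Rightarrow> ('k, 'b) tens \<Rightarrow> ('k, 'b) tens" where
  "shuf f g = concat (map (\<lambda>((c, u), (c', v)).
       map (\<lambda>bs. (c * c', merge bs u v)) (sel (length u) (length v))) (List.product f g))"

text \<open>The factorwise product *, zero between different numbers of factors.\<close>
definition star :: "('k::times, 'b::times) tens \<Rightarrow> ('k, 'b) tens \<Rightarrow> ('k, 'b) tens" where
  "star t t' = concat (map (\<lambda>((c, u), (c', v)).
       if length u = length v then [(c * c', map2 (*) u v)] else []) (List.product t t'))"

definition mult2 :: "('k::comm_monoid_mult, 'b) tens2 \<Rightarrow> ('k, 'b) tens2 \<Rightarrow> ('k, 'b) tens2" where
  "mult2 x y = concat (map (\<lambda>((c, u, v), (c', u', v')).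
       concat (map (\<lambda>((e1, w1), (e2, w2)). [(c * c' * e1 * e2, w1, w2)])
         (List.product (shuf [(1, u)] [(1, u')]) (shuf [(1, v)] [(1, v')]))))
     (List.product x y))"

definition star2 :: "('k::comm_monoid_mult, 'b::times) tens2 \<Rightarrow> ('k, 'b) tens \<Rightarrow> ('k, 'b) tens \<Rightarrow> ('k, 'b) tens2" where
  "star2 x b f = concat (map (\<lambda>(c, u, v).
       concat (map (\<lambda>((c1, w1), (c2, w2)). [(c * c1 * c2, w1, w2)])
         (List.product (star [(1, u)] b) (star [(1, v)] f)))) x)"

definition mu :: "('k::comm_monoid_mult, 'b) tens2 \<Rightarrow> ('k, 'b) tens" where
  "mu x = concat (map (\<lambda>(c, u, v). shuf [(c, u)] [(1, v)]) x)"

definition scale_t :: "'k::times \<Rightarrow> ('k, 'b) tens \<Rightarrow> ('k, 'b) tens" where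
  "scale_t a t = map (\<lambda>(c, w). (a * c, w)) t"

definition scale_t2 :: "'k::times \<Rightarrow> ('k, 'b) tens2 \<Rightarrow> ('k, 'b) tens2" where
  "scale_t2 a x = map (\<lambda>(c, u, v). (a * c, u, v)) x"

text \<open>These conditions determine Delta
uniquely (up to equality of tensors).\<close>
definition is_Delta :: "('k::field \<Rightarrow> 'b::comm_ring_1 \<Rightarrow> 'b) \<Rightarrow> (nat \<Rightarrow> 'b set)
                        \<Rightarrow> (('k, 'b) tens \<Rightarrow> ('k, 'b) tens2) \<Rightarrow> bool" where
  "is_Delta smul Bd D \<longleftrightarrow> (\<forall>d.
     (\<forall>n. \<forall>x\<in>Sym smul Bd d n. tens2_in Bd d (D x)) \<and>
     (\<forall>n. \<forall>x\<in>Sym smul Bd d n. \<forall>y\<in>Sym smul Bd d n. teq smul Bd d n x y \<longrightarrow> teq2 smul Bd d (D x) (D y)) \<and>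
     (\<forall>n. \<forall>x\<in>Sym smul Bd d n. \<forall>y\<in>Sym smul Bd d n. teq2 smul Bd d (D (x @ y)) (D x @ D y)) \<and>
     (\<forall>n a. \<forall>x\<in>Sym smul Bd d n. teq2 smul Bd d (D (scale_t a x)) (scale_t2 a (D x))) \<and>
     teq2 smul Bd d (D [(1, [])]) [(1, [], [])] \<and>
     (\<forall>w\<in>Bd d. teq2 smul Bd d (D [(1, [w])]) [(1, [], [w]), (1, [w], [])]) \<and>
     (\<forall>n n'. \<forall>x\<in>Sym smul Bd d n. \<forall>y\<in>Sym smul Bd d n'.
        teq2 smul Bd d (D (shuf x y)) (mult2 (D x) (D y))))"

end

theory Submission
  imports Defs
begin

(* Tensors are compared through their values on lists of linear functionals, so it suffices to
   evaluate both sides at functionals L_1, ..., L_(n+m) on B_(e+d).  Evaluating a factorwise product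
   a * z at L means evaluating a at the functionals x |-> L_i (x * z_i), which are linear on B_e
   because B is graded.  The shuffle product b . f splits the positions of L into those of b and
   those of f, so the left-hand side becomes a sum over these splittings of values of a at
   rearranged functionals, while the right-hand side is the same sum with Delta(a) evaluated on the
   two parts separately.  The terms agree because a is symmetric, so the rearrangement does not
   matter, and because for symmetric a the value of Delta(a) on two lists of functionals is the
   value of a on their concatenation: writing a = (1/N!) * sum of c * S(w), with S(w) the shuffle
   product of the letters of w, this follows from the multiplicativity of Delta and its value
   1 (x) x + x (x) 1 on letters. *)

lemma sum_list_neutral: "(\<And>x. x \<in> set xs \<Longrightarrow> f x = 0) \<Longrightarrow> (\<Sum>x\<leftarrow>xs. f x) = (0::'a::monoid_add)"
  by (induction xs) simp_all

lemma sum_list_swap: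
  "(\<Sum>x\<leftarrow>xs. \<Sum>y\<leftarrow>ys. f x y) = (\<Sum>y\<leftarrow>ys. \<Sum>x\<leftarrow>xs. f x y :: 'a::comm_monoid_add)"
  by (induction xs) (simp_all add: sum_list_addf)

lemma sum_list_mult_sum_list:
  "(\<Sum>x\<leftarrow>xs. f x) * (\<Sum>y\<leftarrow>ys. g y) = (\<Sum>x\<leftarrow>xs. \<Sum>y\<leftarrow>ys. f x * g y :: 'a::semiring_0)"
  by (simp add: sum_list_mult_const sum_list_const_mult)

lemma sum_list_product:
  "(\<Sum>p\<leftarrow>List.product xs ys. h p) = (\<Sum>x\<leftarrow>xs. \<Sum>y\<leftarrow>ys. h (x, y))"
  by (induction xs) (simp_all add: o_def)

lemma sum_list_concat_map: "(\<Sum>x\<leftarrow>concat xss. f x) = (\<Sum>xs\<leftarrow>xss. \<Sum>x\<leftarrow>xs. f x)"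
  by (induction xss) simp_all

lemma sum_list_sum_swap: "(\<Sum>x\<leftarrow>xs. \<Sum>j\<in>A. f x j) = (\<Sum>j\<in>A. \<Sum>x\<leftarrow>xs. f x j)"
  by (induction xs) (simp_all add: sum.distrib)

lemma sum_list_mset_cong:
  "mset xs = mset ys \<Longrightarrow> (\<Sum>x\<leftarrow>xs. f x) = (\<Sum>x\<leftarrow>ys. f x :: 'a::comm_monoid_add)"
  by (metis mset_map sum_mset_sum_list)

section \<open>Shuffles encoded by Boolean lists\<close>

lemma count_list_True_False: "count_list bs True + count_list bs False = length bs"
  by (induction bs) auto

lemma sum_n_lists_Suc:
  "(\<Sum>bs\<leftarrow>List.n_lists (Suc k) [True, False]. g bs) =
   (\<Sum>bs\<leftarrow>List.n_lists k [True, False]. g (True # bs) + g (False # bs))"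
  by (simp add: sum_list_concat_map o_def add.commute)

lemma sum_n_lists_add:
  "(\<Sum>bs\<leftarrow>List.n_lists (p + q) [True, False]. g bs) =
   (\<Sum>bs1\<leftarrow>List.n_lists p [True, False]. \<Sum>bs2\<leftarrow>List.n_lists q [True, False]. g (bs1 @ bs2) :: 'a::comm_monoid_add)"
proof (induction p arbitrary: g)
  case (Suc p)
  show ?case
    unfolding add_Suc sum_n_lists_Suc Suc.IH by (simp add: sum_list_addf)
qed simp

lemma sum_n_lists_no_True:
  "(\<Sum>bs\<leftarrow>List.n_lists k [True, False]. if count_list bs True = 0 then g bs else 0) =
   (g (replicate k False) :: 'a::comm_monoid_add)"
proof (induction k arbitrary: g)
  case (Suc k)
  show ?case unfolding sum_n_lists_Suc using Suc[of "\<lambda>bs. g (False # bs)"] by simp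
qed simp

definition single_True :: "nat \<Rightarrow> nat \<Rightarrow> bool list" where
  "single_True k j = replicate j False @ True # replicate (k - 1 - j) False"

lemma sum_n_lists_one_True:
  "(\<Sum>bs\<leftarrow>List.n_lists k [True, False]. if count_list bs True = 1 then g bs else 0) =
   (\<Sum>j<k. g (single_True k j) :: 'a::comm_monoid_add)"
proof (induction k arbitrary: g)
  case (Suc k)
  have "(\<Sum>bs\<leftarrow>List.n_lists (Suc k) [True, False]. if count_list bs True = 1 then g bs else 0)
     = (\<Sum>bs\<leftarrow>List.n_lists k [True, False]. (if count_list bs True = 0 then g (True # bs) else 0)
          + (if count_list bs True = 1 then g (False # bs) else 0))"
    unfolding sum_n_lists_Suc by simp
  also have "\<dots> = g (True # replicate k False) + (\<Sum>j<k. g (False # single_True k j))"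
    unfolding sum_list_addf sum_n_lists_no_True Suc.IH ..
  also have "\<dots> = (\<Sum>j<Suc k. g (single_True (Suc k) j))"
    by (simp add: sum.lessThan_Suc_shift single_True_def del: sum.lessThan_Suc)
  finally show ?case .
qed simp

fun pick :: "'a list \<Rightarrow> bool list \<Rightarrow> bool \<Rightarrow> 'a list" where
  "pick (x # xs) (b # bs) t = (if b = t then x # pick xs bs t else pick xs bs t)"
| "pick _ _ t = []"

lemma length_pick: "length bs = length xs \<Longrightarrow> length (pick xs bs t) = count_list bs t"
  by (induction xs bs t rule: pick.induct) auto

lemma set_pick: "set (pick xs bs t) \<subseteq> set xs"
  by (induction xs bs t rule: pick.induct) auto

lemma pick_append:
  "length bs1 = length xs1 \<Longrightarrow> pick (xs1 @ xs2) (bs1 @ bs2) t = pick xs1 bs1 t @ pick xs2 bs2 t"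
proof (induction xs1 arbitrary: bs1)
  case (Cons x xs1) then show ?case by (cases bs1) auto
qed simp

lemma pick_replicate_False:
  "length xs = k \<Longrightarrow> pick xs (replicate k False) t = (if t then [] else xs)"
proof (induction xs arbitrary: k)
  case (Cons x xs) then show ?case by (cases k) auto
qed simp

lemma pick_replicate_False_append:
  "j \<le> length xs \<Longrightarrow>
   pick xs (replicate j False @ bs) t = (if t then [] else take j xs) @ pick (drop j xs) bs t"
proof (induction xs arbitrary: j)
  case (Cons x xs) then show ?case by (cases j) auto
qed simp

definition remove_nth :: "nat \<Rightarrow> 'a list \<Rightarrow> 'a list" where
  "remove_nth j xs = take j xs @ drop (Suc j) xs"

lemma set_remove_nth: "set (remove_nth j xs) \<subseteq> set xs"
  unfolding remove_nth_def by (auto dest: in_set_takeD in_set_dropD)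

lemma mset_nth_remove_nth: "j < length xs \<Longrightarrow> mset (xs ! j # remove_nth j xs) = mset xs"
  by (metis id_take_nth_drop mset.simps(2) mset_append remove_nth_def union_mset_add_mset_right)

lemma pick_single_True:
  assumes "j < length xs"
  shows "pick xs (single_True (length xs) j) True = [xs ! j]"
    and "pick xs (single_True (length xs) j) False = remove_nth j xs"
  using assms pick_replicate_False_append[of j xs]
  by (auto simp: single_True_def remove_nth_def Cons_nth_drop_Suc[symmetric] pick_replicate_False)

lemma length_merge:
  "count_list bs True = length u \<Longrightarrow> count_list bs False = length v \<Longrightarrow>
   length (merge bs u v) = length bs"
  by (induction bs u v rule: merge.induct) auto

lemma set_merge: "set (merge bs u v) \<subseteq> set u \<union> set v"
  by (induction bs u v rule: merge.induct) auto

lemma merge_words: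
  assumes "bs \<in> set (sel (length u) (length v))"
  shows "length (merge bs u v) = length u + length v" and "set (merge bs u v) \<subseteq> set u \<union> set v"
proof -
  from assms have "length bs = length u + length v" "count_list bs True = length u"
    by (auto simp: sel_def set_n_lists)
  moreover from this have "count_list bs False = length v"
    using count_list_True_False[of bs] by simp
  ultimately show "length (merge bs u v) = length u + length v"
    using length_merge by metis
qed (rule set_merge)

definition prod_apply :: "('b \<Rightarrow> 'k::comm_semiring_1) list \<Rightarrow> 'b list \<Rightarrow> 'k" where
  "prod_apply L w = prod_list (map2 (\<lambda>\<phi> x. \<phi> x) L w)"

definition word_eval :: "('b \<Rightarrow> 'k::comm_semiring_1) list \<Rightarrow> 'b list \<Rightarrow> 'k" where
  "word_eval L w = (if length w = length L then prod_apply L w else 0)"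

definition lin_ext :: "('b list \<Rightarrow> 'k::comm_semiring_1) \<Rightarrow> ('k, 'b) tens \<Rightarrow> 'k" where
  "lin_ext G t = (\<Sum>(c, w)\<leftarrow>t. c * G w)"

abbreviation ev :: "('k::comm_semiring_1, 'b) tens \<Rightarrow> ('b \<Rightarrow> 'k) list \<Rightarrow> 'k" where
  "ev t L \<equiv> lin_ext (word_eval L) t"

definition ev2 :: "('k::comm_semiring_1, 'b) tens2 \<Rightarrow> ('b \<Rightarrow> 'k) list \<Rightarrow> ('b \<Rightarrow> 'k) list \<Rightarrow> 'k" where
  "ev2 X L M = (\<Sum>(c, u, v)\<leftarrow>X. c * word_eval L u * word_eval M v)"

lemma prod_apply_Nil [simp]: "prod_apply [] w = 1" "prod_apply L [] = 1"
  by (simp_all add: prod_apply_def)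

lemma prod_apply_Cons [simp]: "prod_apply (\<phi> # L) (x # w) = \<phi> x * prod_apply L w"
  by (simp add: prod_apply_def)

lemma prod_apply_append:
  "length L1 = length u \<Longrightarrow> prod_apply (L1 @ L2) (u @ v) = prod_apply L1 u * prod_apply L2 v"
  by (induction L1 u rule: list_induct2) (simp_all add: mult.assoc)

lemma prod_apply_conv_prod:
  "length L = length w \<Longrightarrow> prod_apply L w = (\<Prod>i<length w. (L ! i) (w ! i))"
  by (induction L w rule: list_induct2) (simp_all add: prod.lessThan_Suc_shift del: prod.lessThan_Suc)

lemma prod_apply_merge:
  "count_list bs True = length u \<Longrightarrow> count_list bs False = length v \<Longrightarrow> length L = length bs \<Longrightarrow>
   prod_apply L (merge bs u v) = prod_apply (pick L bs True) u * prod_apply (pick L bs False) v"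
proof (induction bs u v arbitrary: L rule: merge.induct)
  case (2 bs x xs ys)
  then show ?case by (cases L) (simp_all add: mult.assoc)
next
  case (4 bs xs y ys)
  then show ?case by (cases L) (simp_all add: mult.left_commute)
qed simp_all

lemma lin_ext_Nil [simp]: "lin_ext G [] = 0"
  and lin_ext_Cons [simp]: "lin_ext G ((c, w) # t) = c * G w + lin_ext G t"
  and lin_ext_append [simp]: "lin_ext G (s @ t) = lin_ext G s + lin_ext G t"
  by (simp_all add: lin_ext_def)

lemma lin_ext_concat: "lin_ext G (concat ts) = (\<Sum>t\<leftarrow>ts. lin_ext G t)"
  by (induction ts) simp_all

lemma ev2_Nil [simp]: "ev2 [] L M = 0"
  and ev2_Cons [simp]: "ev2 ((c, u, v) # X) L M = c * word_eval L u * word_eval M v + ev2 X L M"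
  and ev2_append [simp]: "ev2 (X @ Y) L M = ev2 X L M + ev2 Y L M"
  by (simp_all add: ev2_def)

lemma ev_scale_t: "ev (scale_t s t) L = s * ev t L"
  by (induction t) (auto simp: scale_t_def algebra_simps)

lemma ev2_scale_t2: "ev2 (scale_t2 s X) L M = s * ev2 X L M"
  by (induction X) (auto simp: scale_t2_def algebra_simps)

lemma ev_eq_0_if_length_ne:
  "\<forall>(c, w)\<in>set t. length w = n \<Longrightarrow> length L \<noteq> n \<Longrightarrow> ev t L = 0"
  by (induction t) (auto simp: word_eval_def)

section \<open>Evaluation of the products\<close>

lemma sum_sel_word_eval_merge:
  "(\<Sum>bs\<leftarrow>sel (length u) (length v). word_eval L (merge bs u v)) =
   (\<Sum>bs\<leftarrow>List.n_lists (length L) [True, False].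
      word_eval (pick L bs True) u * word_eval (pick L bs False) v)"
proof (cases "length u + length v = length L")
  case True
  have "(if count_list bs True = length u then word_eval L (merge bs u v) else 0) =
        word_eval (pick L bs True) u * word_eval (pick L bs False) v"
    if "length bs = length L" for bs
    using that True count_list_True_False[of bs] length_merge[of bs u v] prod_apply_merge[of bs u v L]
    by (auto simp: word_eval_def length_pick)
  then show ?thesis
    unfolding sel_def sum_list_map_filter' True
    by (intro arg_cong[where f = sum_list] map_cong refl) (simp add: set_n_lists)
next
  case False
  have "word_eval (pick L bs True) u * word_eval (pick L bs False) v = 0"
    if "length bs = length L" for bs
    using that False count_list_True_False[of bs] by (auto simp: word_eval_def length_pick)
  moreover have "word_eval L (merge bs u v) = 0" if "bs \<in> set (sel (length u) (length v))" for bs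
    using that False merge_words(1) by (fastforce simp: word_eval_def)
  ultimately show ?thesis
    by (simp add: sum_list_neutral length_n_lists_elem)
qed

lemma lin_ext_shuf:
  "lin_ext G (shuf A B) = (\<Sum>(c, u)\<leftarrow>A. \<Sum>(c', v)\<leftarrow>B.
     c * c' * (\<Sum>bs\<leftarrow>sel (length u) (length v). G (merge bs u v)))"
  unfolding shuf_def lin_ext_concat map_map sum_list_product
  by (simp add: lin_ext_def sum_list_const_mult split_def o_def mult.assoc)

lemma ev_shuf:
  "ev (shuf A B) L = (\<Sum>bs\<leftarrow>List.n_lists (length L) [True, False].
     ev A (pick L bs True) * ev B (pick L bs False))"
proof -
  let ?N = "List.n_lists (length L) [True, False]"
  let ?f = "\<lambda>x bs. fst x * word_eval (pick L bs True) (snd x)"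
  let ?g = "\<lambda>y bs. fst y * word_eval (pick L bs False) (snd y)"
  have "ev (shuf A B) L = (\<Sum>x\<leftarrow>A. \<Sum>y\<leftarrow>B. \<Sum>bs\<leftarrow>?N. ?f x bs * ?g y bs)"
    by (simp add: lin_ext_shuf sum_sel_word_eval_merge sum_list_const_mult split_def mult_ac)
  also have "\<dots> = (\<Sum>bs\<leftarrow>?N. \<Sum>x\<leftarrow>A. \<Sum>y\<leftarrow>B. ?f x bs * ?g y bs)"
    by (simp only: sum_list_swap[where ys = ?N])
  also have "\<dots> = (\<Sum>bs\<leftarrow>?N. ev A (pick L bs True) * ev B (pick L bs False))"
    by (simp add: lin_ext_def sum_list_mult_sum_list case_prod_beta)
  finally show ?thesis .
qed

lemma ev2_concat: "ev2 (concat Xs) L M = (\<Sum>X\<leftarrow>Xs. ev2 X L M)"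
  by (induction Xs) simp_all

lemma ev2_tensor_product:
  "ev2 (concat (map (\<lambda>((c1, w1), (c2, w2)). [(k * c1 * c2, w1, w2)]) (List.product S1 S2))) L M =
   k * ev S1 L * ev S2 M"
  by (simp add: ev2_def sum_list_concat_map sum_list_product lin_ext_def sum_list_mult_sum_list
      sum_list_const_mult split_def o_def mult_ac)

lemma ev2_mult2_single:
  "ev2 (mult2 [x] [y]) L M =
   (\<Sum>bs1\<leftarrow>List.n_lists (length L) [True, False]. \<Sum>bs2\<leftarrow>List.n_lists (length M) [True, False].
     ev2 [x] (pick L bs1 True) (pick M bs2 True) * ev2 [y] (pick L bs1 False) (pick M bs2 False))"
proof -
  obtain c u v c' u' v' where xy: "x = (c, u, v)" "y = (c', u', v')"
    by (cases x, cases y)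
  then have "mult2 [x] [y] = concat (map (\<lambda>((e1, w1), (e2, w2)). [(c * c' * e1 * e2, w1, w2)])
      (List.product (shuf [(1, u)] [(1, u')]) (shuf [(1, v)] [(1, v')])))"
    by (simp add: mult2_def)
  then show ?thesis
    by (simp only: ev2_tensor_product)
      (simp add: xy ev_shuf sum_list_mult_sum_list sum_list_const_mult mult_ac)
qed

lemma mult2_Cons: "mult2 (x # X) Y = mult2 [x] Y @ mult2 X Y"
  and mult2_single_Cons: "mult2 [x] (y # Y) = mult2 [x] [y] @ mult2 [x] Y"
  by (simp_all add: mult2_def)

lemma ev2_Cons_split: "ev2 (x # X) L M = ev2 [x] L M + ev2 X L M"
  by (cases x) simp

lemma ev2_mult2:
  "ev2 (mult2 X Y) L M =
   (\<Sum>bs1\<leftarrow>List.n_lists (length L) [True, False]. \<Sum>bs2\<leftarrow>List.n_lists (length M) [True, False].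
     ev2 X (pick L bs1 True) (pick M bs2 True) * ev2 Y (pick L bs1 False) (pick M bs2 False))"
proof (induction X)
  case Nil
  then show ?case by (simp add: mult2_def)
next
  case (Cons x X)
  have "ev2 (mult2 [x] Y) L M =
   (\<Sum>bs1\<leftarrow>List.n_lists (length L) [True, False]. \<Sum>bs2\<leftarrow>List.n_lists (length M) [True, False].
     ev2 [x] (pick L bs1 True) (pick M bs2 True) * ev2 Y (pick L bs1 False) (pick M bs2 False))"
  proof (induction Y)
    case Nil
    then show ?case by (simp add: mult2_def)
  next
    case (Cons y Y)
    \<comment> \<open>The splitting rules are instantiated: unrestricted, they would also split \<open>[y] = y # []\<close> forever.\<close>
    show ?case
      by (simp only: mult2_single_Cons[of x y Y] ev2_append Cons.IH ev2_mult2_single ev2_Cons_split[of y Y]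
          distrib_left sum_list_addf)
  qed
  then show ?case
    by (simp only: mult2_Cons[of x X] ev2_append Cons.IH ev2_Cons_split[of x X] distrib_right sum_list_addf)
qed

definition mult_funs :: "'b::times list \<Rightarrow> ('b \<Rightarrow> 'k) list \<Rightarrow> ('b \<Rightarrow> 'k) list" where
  "mult_funs z L = map2 (\<lambda>\<phi> y x. \<phi> (x * y)) L z"

lemma length_mult_funs [simp]: "length (mult_funs z L) = min (length L) (length z)"
  by (simp add: mult_funs_def)

lemma mult_funs_Nil [simp]: "mult_funs z [] = []" "mult_funs [] L = []"
  by (simp_all add: mult_funs_def)

lemma mult_funs_Cons [simp]: "mult_funs (y # z) (\<phi> # L) = (\<lambda>x. \<phi> (x * y)) # mult_funs z L"
  by (simp add: mult_funs_def)

lemma prod_apply_map2_times: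
  "length u = length z \<Longrightarrow> length z = length L \<Longrightarrow>
   prod_apply L (map2 (*) u z) = prod_apply (mult_funs z L) u"
  by (induction u z L rule: list_induct3) simp_all

lemma ev_star:
  "ev (star A Z) L = (\<Sum>(c, z)\<leftarrow>Z. c * (if length z = length L then ev A (mult_funs z L) else 0))"
proof -
  have "ev (star A Z) L = (\<Sum>x\<leftarrow>A. \<Sum>y\<leftarrow>Z. fst y * (fst x *
      (if length (snd y) = length L then word_eval (mult_funs (snd y) L) (snd x) else 0)))"
    unfolding star_def lin_ext_concat map_map sum_list_product
    by (intro arg_cong[where f = sum_list] map_cong refl)
      (auto simp: word_eval_def prod_apply_map2_times mult_ac)
  also have "\<dots> = (\<Sum>y\<leftarrow>Z. \<Sum>x\<leftarrow>A. fst y * (fst x *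
      (if length (snd y) = length L then word_eval (mult_funs (snd y) L) (snd x) else 0)))"
    by (rule sum_list_swap)
  also have "\<dots> = (\<Sum>(c, z)\<leftarrow>Z. c * (if length z = length L then ev A (mult_funs z L) else 0))"
    by (intro arg_cong[where f = sum_list] map_cong refl) (simp add: lin_ext_def split_def sum_list_const_mult)
  finally show ?thesis .
qed

lemma ev2_conv_sum_single: "ev2 X L M = (\<Sum>x\<leftarrow>X. ev2 [x] L M)"
  by (induction X) (simp_all add: ev2_def)

lemma ev2_star2_single:
  "ev2 (star2 [y] b f) L1 L2 = (\<Sum>(c1, u)\<leftarrow>b. \<Sum>(c2, v)\<leftarrow>f. c1 * c2 *
     (if length u = length L1 \<and> length v = length L2
      then ev2 [y] (mult_funs u L1) (mult_funs v L2) else 0))"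
proof -
  obtain c u0 v0 where y: "y = (c, u0, v0)" by (cases y)
  let ?g = "\<lambda>x L w. fst x * (if length (snd x) = length L then word_eval (mult_funs (snd x) L) w else 0)"
  have "ev2 (star2 [y] b f) L1 L2 = c * ev (star [(1, u0)] b) L1 * ev (star [(1, v0)] f) L2"
    using ev2_tensor_product[of c] by (simp add: star2_def y)
  also have "\<dots> = (\<Sum>x1\<leftarrow>b. c * ?g x1 L1 u0) * (\<Sum>x2\<leftarrow>f. ?g x2 L2 v0)"
    by (simp add: ev_star split_def sum_list_const_mult cong: if_cong)
  also have "\<dots> = (\<Sum>x1\<leftarrow>b. \<Sum>x2\<leftarrow>f. c * ?g x1 L1 u0 * ?g x2 L2 v0)"
    by (rule sum_list_mult_sum_list)
  also have "\<dots> = (\<Sum>(c1, u)\<leftarrow>b. \<Sum>(c2, v)\<leftarrow>f. c1 * c2 *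
     (if length u = length L1 \<and> length v = length L2
      then ev2 [y] (mult_funs u L1) (mult_funs v L2) else 0))"
    unfolding split_def by (intro arg_cong[where f = sum_list] map_cong refl) (auto simp: y mult_ac)
  finally show ?thesis .
qed

lemma ev2_star2:
  "ev2 (star2 Y b f) L1 L2 = (\<Sum>(c1, u)\<leftarrow>b. \<Sum>(c2, v)\<leftarrow>f. c1 * c2 *
     (if length u = length L1 \<and> length v = length L2
      then ev2 Y (mult_funs u L1) (mult_funs v L2) else 0))"
proof -
  let ?P = "\<lambda>u v. length u = length L1 \<and> length v = length L2"
  have "star2 Y b f = concat (map (\<lambda>y. star2 [y] b f) Y)"
    by (simp add: star2_def)
  then have "ev2 (star2 Y b f) L1 L2 = (\<Sum>y\<leftarrow>Y. \<Sum>x1\<leftarrow>b. \<Sum>x2\<leftarrow>f. fst x1 * fst x2 *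
     (if ?P (snd x1) (snd x2) then ev2 [y] (mult_funs (snd x1) L1) (mult_funs (snd x2) L2) else 0))"
    by (simp add: ev2_concat ev2_star2_single split_def o_def)
  also have "\<dots> = (\<Sum>x1\<leftarrow>b. \<Sum>x2\<leftarrow>f. \<Sum>y\<leftarrow>Y. fst x1 * fst x2 *
     (if ?P (snd x1) (snd x2) then ev2 [y] (mult_funs (snd x1) L1) (mult_funs (snd x2) L2) else 0))"
    by (simp only: sum_list_swap[where xs = Y])
  also have "\<dots> = (\<Sum>(c1, u)\<leftarrow>b. \<Sum>(c2, v)\<leftarrow>f. c1 * c2 *
     (if ?P u v then ev2 Y (mult_funs u L1) (mult_funs v L2) else 0))"
    unfolding split_def ev2_conv_sum_single[of Y]
    by (intro arg_cong[where f = sum_list] map_cong refl) (auto simp: sum_list_const_mult)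
  finally show ?thesis .
qed

lemma ev_mu:
  "ev (mu X) L = (\<Sum>bs\<leftarrow>List.n_lists (length L) [True, False]. ev2 X (pick L bs True) (pick L bs False))"
proof -
  let ?N = "List.n_lists (length L) [True, False]"
  have "ev (mu X) L = (\<Sum>x\<leftarrow>X. \<Sum>bs\<leftarrow>?N. ev2 [x] (pick L bs True) (pick L bs False))"
    unfolding mu_def lin_ext_concat map_map
    by (intro arg_cong[where f = sum_list] map_cong refl) (auto simp: ev_shuf mult.assoc)
  also have "\<dots> = (\<Sum>bs\<leftarrow>?N. ev2 X (pick L bs True) (pick L bs False))"
    by (simp only: sum_list_swap[where xs = X] ev2_conv_sum_single[of X])
  finally show ?thesis .
qed

definition lin_funs :: "('k::field \<Rightarrow> 'b::comm_ring_1 \<Rightarrow> 'b) \<Rightarrow> (nat \<Rightarrow> 'b set) \<Rightarrow> nat \<Rightarrow> ('b \<Rightarrow> 'k) list \<Rightarrow> bool"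
  where "lin_funs smul Bd d L \<longleftrightarrow> (\<forall>\<phi>\<in>set L. lin_fun smul Bd d \<phi>)"

lemma lin_funs_append [simp]: "lin_funs smul Bd d (L @ M) \<longleftrightarrow> lin_funs smul Bd d L \<and> lin_funs smul Bd d M"
  and lin_funs_Cons [simp]: "lin_funs smul Bd d (\<phi> # L) \<longleftrightarrow> lin_fun smul Bd d \<phi> \<and> lin_funs smul Bd d L"
  by (auto simp: lin_funs_def)

lemma lin_funs_subset: "lin_funs smul Bd d L \<Longrightarrow> set M \<subseteq> set L \<Longrightarrow> lin_funs smul Bd d M"
  by (auto simp: lin_funs_def)

lemma lin_funs_pick: "lin_funs smul Bd d L \<Longrightarrow> lin_funs smul Bd d (pick L bs t)"
  by (rule lin_funs_subset[OF _ set_pick])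

lemma lin_funs_mset_eq: "lin_funs smul Bd d L \<Longrightarrow> mset L = mset M \<Longrightarrow> lin_funs smul Bd d M"
  by (auto simp: lin_funs_def dest: mset_eq_setD)

lemma tens_eval_eq_ev: "tens_in Bd d n t \<Longrightarrow> tens_eval \<phi>s t = ev t (map \<phi>s [0..<n])"
  unfolding tens_eval_def lin_ext_def tens_in_def
  by (intro arg_cong[where f = sum_list] map_cong refl) (auto simp: word_eval_def prod_apply_conv_prod)

lemma teq_iff_ev:
  "teq smul Bd d n t t' \<longleftrightarrow> tens_in Bd d n t \<and> tens_in Bd d n t' \<and>
     (\<forall>L. lin_funs smul Bd d L \<longrightarrow> length L = n \<longrightarrow> ev t L = ev t' L)"
proof
  assume teq: "teq smul Bd d n t t'"
  then have t: "tens_in Bd d n t" "tens_in Bd d n t'"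
    by (simp_all add: teq_def)
  have "ev t L = ev t' L" if L: "lin_funs smul Bd d L" "length L = n" for L
  proof -
    have "tens_eval ((!) L) t = tens_eval ((!) L) t'"
      using teq L unfolding teq_def lin_funs_def by simp
    moreover have "map ((!) L) [0..<n] = L"
      using L(2) map_nth by blast
    ultimately show ?thesis
      using t by (simp add: tens_eval_eq_ev[of Bd d n])
  qed
  with t show "tens_in Bd d n t \<and> tens_in Bd d n t' \<and>
     (\<forall>L. lin_funs smul Bd d L \<longrightarrow> length L = n \<longrightarrow> ev t L = ev t' L)"
    by blast
next
  assume h: "tens_in Bd d n t \<and> tens_in Bd d n t' \<and>
    (\<forall>L. lin_funs smul Bd d L \<longrightarrow> length L = n \<longrightarrow> ev t L = ev t' L)"
  have eval: "tens_eval \<phi>s t = tens_eval \<phi>s t'" if "\<forall>i<n. lin_fun smul Bd d (\<phi>s i)" for \<phi>s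
  proof -
    have "lin_funs smul Bd d (map \<phi>s [0..<n])"
      using that by (auto simp: lin_funs_def)
    with h show ?thesis
      by (simp add: tens_eval_eq_ev[of Bd d n])
  qed
  show "teq smul Bd d n t t'"
    unfolding teq_def using h eval by (intro conjI allI impI) simp_all
qed

lemma tens2_eval_eq_ev2: "tens2_eval p q \<phi>s X = ev2 X (map \<phi>s [0..<p]) (map \<phi>s [p..<p + q])"
proof -
  have "(if length u = p \<and> length v = q then c * (\<Prod>i<p + q. \<phi>s i ((u @ v) ! i)) else 0) =
        c * word_eval (map \<phi>s [0..<p]) u * word_eval (map \<phi>s [p..<p + q]) v" for c u v
  proof (cases "length u = p \<and> length v = q")
    case True
    have "(\<Prod>i<p + q. \<phi>s i ((u @ v) ! i)) = prod_apply (map \<phi>s [0..<p + q]) (u @ v)"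
      using True by (subst prod_apply_conv_prod) auto
    also have "\<dots> = prod_apply (map \<phi>s [0..<p] @ map \<phi>s [p..<p + q]) (u @ v)"
      using upt_add_eq_append[of 0 p q] by simp
    also have "\<dots> = prod_apply (map \<phi>s [0..<p]) u * prod_apply (map \<phi>s [p..<p + q]) v"
      using True by (simp add: prod_apply_append)
    finally show ?thesis
      using True by (simp add: word_eval_def mult.assoc)
  qed (auto simp: word_eval_def)
  then show ?thesis unfolding tens2_eval_def ev2_def by (simp add: split_def)
qed

lemma teq2_imp_ev2_eq:
  assumes "teq2 smul Bd d X Y" "lin_funs smul Bd d L" "lin_funs smul Bd d M"
  shows "ev2 X L M = ev2 Y L M"
proof -
  define \<phi>s where "\<phi>s = (!) (L @ M)"
  have "\<forall>i<length L + length M. lin_fun smul Bd d (\<phi>s i)"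
    using assms(2,3) by (auto simp: \<phi>s_def lin_funs_def nth_append)
  then have "tens2_eval (length L) (length M) \<phi>s X = tens2_eval (length L) (length M) \<phi>s Y"
    using assms(1) unfolding teq2_def by blast
  moreover have "map \<phi>s [0..<length L] = L"
    unfolding list_eq_iff_nth_eq by (simp add: \<phi>s_def nth_append)
  moreover have "map \<phi>s [length L..<length L + length M] = M"
    unfolding list_eq_iff_nth_eq by (simp add: \<phi>s_def nth_append)
  ultimately show ?thesis by (simp only: tens2_eval_eq_ev2)
qed

section \<open>Symmetric tensors\<close>

definition perm_invariant :: "('k::field \<Rightarrow> 'b::comm_ring_1 \<Rightarrow> 'b) \<Rightarrow> (nat \<Rightarrow> 'b set) \<Rightarrow> nat \<Rightarrow> ('k, 'b) tens \<Rightarrow> bool"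
  where "perm_invariant smul Bd d t \<longleftrightarrow>
    (\<forall>L L'. lin_funs smul Bd d L \<longrightarrow> mset L = mset L' \<longrightarrow> ev t L = ev t L')"

lemma perm_invariantD:
  "perm_invariant smul Bd d t \<Longrightarrow> lin_funs smul Bd d L \<Longrightarrow> mset L = mset L' \<Longrightarrow> ev t L = ev t L'"
  unfolding perm_invariant_def by blast

lemma word_eval_permute:
  assumes \<sigma>: "\<sigma> permutes {..<n}" and "length w = n" "length L = n"
  shows "word_eval L (map (\<lambda>i. w ! \<sigma> i) [0..<length w]) = word_eval (permute_list (inv \<sigma>) L) w"
proof -
  have inv: "inv \<sigma> permutes {..<n}"
    using \<sigma> by (rule permutes_inv)
  have "(\<Prod>i<n. (L ! i) (w ! \<sigma> i)) = (\<Prod>j<n. (L ! inv \<sigma> j) (w ! \<sigma> (inv \<sigma> j)))"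
    using prod.permute[OF inv, of "\<lambda>i. (L ! i) (w ! \<sigma> i)"] by (simp add: o_def)
  also have "\<dots> = (\<Prod>j<n. (permute_list (inv \<sigma>) L ! j) (w ! j))"
    using assms inv by (intro prod.cong) (auto simp: permutes_inverses(1) permute_list_nth)
  finally show ?thesis
    using assms by (simp add: word_eval_def prod_apply_conv_prod)
qed

lemma ev_perm_t:
  assumes "\<sigma> permutes {..<n}" "tens_in Bd d n t" "length L = n"
  shows "ev (perm_t \<sigma> t) L = ev t (permute_list (inv \<sigma>) L)"
  using assms(2) unfolding perm_t_def lin_ext_def tens_in_def
  by (intro arg_cong[where f = sum_list]) (auto simp: word_eval_permute[OF assms(1) _ assms(3)])

lemma perm_invariant_if_Sym:
  assumes Sym: "t \<in> Sym smul Bd d n"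
  shows "perm_invariant smul Bd d t"
  unfolding perm_invariant_def
proof (intro allI impI)
  fix L L' assume L: "lin_funs smul Bd d L" "mset L = mset L'"
  have t: "tens_in Bd d n t"
    using Sym by (simp add: Sym_def)
  show "ev t L = ev t L'"
  proof (cases "length L = n")
    case False
    moreover have "length L' \<noteq> n"
      using False L(2) by (metis mset_eq_length)
    moreover have "\<forall>(c, w)\<in>set t. length w = n"
      using t by (auto simp: tens_in_def)
    ultimately show ?thesis
      by (simp add: ev_eq_0_if_length_ne)
  next
    case True
    have L': "length L' = n" "lin_funs smul Bd d L'"
      using L True by (metis mset_eq_length, metis lin_funs_mset_eq)
    obtain p where p: "p permutes {..<n}" "permute_list p L' = L"
      using mset_eq_permutation[OF L(2)] L' by metis
    have inv: "inv p permutes {..<n}"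
      using p(1) by (rule permutes_inv)
    then have "ev (perm_t (inv p) t) L' = ev t L'"
      using Sym L' by (simp add: Sym_def teq_iff_ev)
    moreover have "ev (perm_t (inv p) t) L' = ev t (permute_list p L')"
      using ev_perm_t[OF inv t L'(1)] p(1) by (simp add: inv_inv_eq permutes_bij)
    ultimately show ?thesis
      using p(2) by simp
  qed
qed

lemma Sym_if_perm_invariant:
  assumes t: "tens_in Bd d n t" "perm_invariant smul Bd d t"
  shows "t \<in> Sym smul Bd d n"
proof -
  have "teq smul Bd d n (perm_t \<sigma> t) t" if \<sigma>: "\<sigma> permutes {..<n}" for \<sigma>
    unfolding teq_iff_ev
  proof (intro conjI allI impI)
    show "tens_in Bd d n (perm_t \<sigma> t)"
      using t(1) permutes_in_image[OF \<sigma>] unfolding tens_in_def perm_t_def by (fastforce simp: subset_iff)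
    fix L assume L: "lin_funs smul Bd d L" "length L = n"
    have "ev (perm_t \<sigma> t) L = ev t (permute_list (inv \<sigma>) L)"
      by (rule ev_perm_t[OF \<sigma> t(1) L(2)])
    also have "\<dots> = ev t L"
      using t(2) L permutes_inv[OF \<sigma>] unfolding perm_invariant_def by (metis mset_permute_list)
    finally show "ev (perm_t \<sigma> t) L = ev t L" .
  qed (use t in simp)
  with t show ?thesis
    by (simp add: Sym_def)
qed

lemma Sym_iff_perm_invariant:
  "t \<in> Sym smul Bd d n \<longleftrightarrow> tens_in Bd d n t \<and> perm_invariant smul Bd d t"
  using perm_invariant_if_Sym Sym_if_perm_invariant by (fastforce simp: Sym_def)

lemma Sym_Nil: "[] \<in> Sym smul Bd d n"
  by (simp add: Sym_iff_perm_invariant tens_in_def perm_invariant_def)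

lemma Sym_append: "s \<in> Sym smul Bd d n \<Longrightarrow> t \<in> Sym smul Bd d n \<Longrightarrow> s @ t \<in> Sym smul Bd d n"
  by (auto simp: Sym_iff_perm_invariant perm_invariant_def tens_in_def)

lemma Sym_scale_t: "t \<in> Sym smul Bd d n \<Longrightarrow> scale_t c t \<in> Sym smul Bd d n"
  unfolding Sym_iff_perm_invariant perm_invariant_def ev_scale_t by (auto simp: tens_in_def scale_t_def)

lemma Sym_letter:
  fixes smul :: "'k::field \<Rightarrow> 'b::comm_ring_1 \<Rightarrow> 'b"
  shows "x \<in> Bd d \<Longrightarrow> [(1, [x])] \<in> Sym smul Bd d 1"
  unfolding Sym_iff_perm_invariant perm_invariant_def
proof (intro conjI allI impI)
  fix L L' :: "('b \<Rightarrow> 'k) list"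
  assume mset: "mset L = mset L'"
  show "ev [(1, [x])] L = ev [(1, [x])] L'"
  proof (cases "length L = 1")
    case True
    then obtain \<phi> where "L = [\<phi>]"
      by (auto simp: length_Suc_conv)
    moreover from this mset have "L' = [\<phi>]"
      by (simp add: eq_commute[of "{#\<phi>#}"])
    ultimately show ?thesis by simp
  qed (use mset_eq_length[OF mset] in \<open>simp add: word_eval_def\<close>)
qed (simp add: tens_in_def)

section \<open>Symmetrization\<close>

fun symmetrize :: "'b list \<Rightarrow> ('k::comm_semiring_1, 'b) tens" where
  "symmetrize [] = [(1, [])]"
| "symmetrize (x # w) = shuf [(1, [x])] (symmetrize w)"

lemma ev_shuf_letter:
  "ev (shuf [(1, [x])] B) L = (\<Sum>j<length L. (L ! j) x * ev B (remove_nth j L))"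
proof -
  let ?bs = "single_True (length L)"
  have "ev (shuf [(1, [x])] B) L = (\<Sum>bs\<leftarrow>List.n_lists (length L) [True, False].
      if count_list bs True = 1 then word_eval (pick L bs True) [x] * ev B (pick L bs False) else 0)"
    unfolding ev_shuf
    by (intro arg_cong[where f = sum_list] map_cong refl) (auto simp: word_eval_def length_pick set_n_lists)
  also have "\<dots> = (\<Sum>j<length L. word_eval (pick L (?bs j) True) [x] * ev B (pick L (?bs j) False))"
    by (rule sum_n_lists_one_True)
  also have "\<dots> = (\<Sum>j<length L. (L ! j) x * ev B (remove_nth j L))"
    by (intro sum.cong) (auto simp: pick_single_True word_eval_def)
  finally show ?thesis .
qed

lemma shuf_words:
  assumes "(c, z) \<in> set (shuf A B)"
  obtains c1 u c2 v where "(c1, u) \<in> set A" "(c2, v) \<in> set B"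
    "length z = length u + length v" "set z \<subseteq> set u \<union> set v"
  using assms merge_words unfolding shuf_def by fastforce

lemma words_symmetrize:
  fixes c :: "'k::comm_semiring_1"
  shows "(c, z) \<in> set (symmetrize w) \<Longrightarrow> length z = length w \<and> set z \<subseteq> set w"
proof (induction w arbitrary: c z)
  case (Cons x w)
  have "(c, z) \<in> set (shuf [(1, [x])] (symmetrize w))"
    using Cons.prems by simp
  then obtain c1 c2 :: 'k and u v where "(c1, u) \<in> set [(1, [x])]" "(c2, v) \<in> set (symmetrize w)"
    "length z = length u + length v" "set z \<subseteq> set u \<union> set v"
    by (rule shuf_words)
  with Cons.IH[of c2 v] show ?case
    by auto
qed simp

lemma perm_invariant_symmetrize: "perm_invariant smul Bd d (symmetrize w)"
proof (induction w)
  case Nil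
  show ?case
    unfolding perm_invariant_def by (auto simp: word_eval_def dest: mset_eq_length)
next
  case (Cons x w)
  have remove1: "ev (symmetrize (x # w)) L = (\<Sum>\<phi>\<leftarrow>L. \<phi> x * ev (symmetrize w) (remove1 \<phi> L))"
    if "lin_funs smul Bd d L" for L
  proof -
    have "ev (symmetrize w) (remove_nth j L) = ev (symmetrize w) (remove1 (L ! j) L)" if "j < length L" for j
      using Cons.IH \<open>lin_funs smul Bd d L\<close> set_remove_nth[of j L] mset_nth_remove_nth[OF that]
      unfolding perm_invariant_def by (metis lin_funs_subset add_mset_remove_trivial mset.simps(2) mset_remove1)
    then show ?thesis
      by (simp add: ev_shuf_letter sum_list_sum_nth atLeast0LessThan)
  qed
  show ?case
    unfolding perm_invariant_def
  proof (intro allI impI)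
    fix L L' assume L: "lin_funs smul Bd d L" "mset L = mset L'"
    then have L': "lin_funs smul Bd d L'"
      by (rule lin_funs_mset_eq)
    have "ev (symmetrize (x # w)) L = (\<Sum>\<phi>\<leftarrow>L. \<phi> x * ev (symmetrize w) (remove1 \<phi> L))"
      by (rule remove1[OF L(1)])
    also have "\<dots> = (\<Sum>\<phi>\<leftarrow>L. \<phi> x * ev (symmetrize w) (remove1 \<phi> L'))"
    proof -
      have "mset (remove1 \<phi> L) = mset (remove1 \<phi> L')" for \<phi>
        using L(2) by simp
      then show ?thesis
        using Cons.IH lin_funs_subset[OF L(1) set_remove1_subset] unfolding perm_invariant_def by metis
    qed
    also have "\<dots> = (\<Sum>\<phi>\<leftarrow>L'. \<phi> x * ev (symmetrize w) (remove1 \<phi> L'))"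
      by (rule sum_list_mset_cong[OF L(2)])
    also have "\<dots> = ev (symmetrize (x # w)) L'"
      by (rule remove1[OF L', symmetric])
    finally show "ev (symmetrize (x # w)) L = ev (symmetrize (x # w)) L'" .
  qed
qed

lemma Sym_symmetrize: "set w \<subseteq> Bd d \<Longrightarrow> symmetrize w \<in> Sym smul Bd d (length w)"
  using perm_invariant_symmetrize words_symmetrize
  by (fastforce simp: Sym_iff_perm_invariant tens_in_def)

definition contract :: "('b \<Rightarrow> 'k::comm_semiring_1) \<Rightarrow> ('k, 'b) tens \<Rightarrow> ('k, 'b) tens" where
  "contract \<phi> a = map (\<lambda>(c, w). (c * \<phi> (hd w), tl w)) a"

lemma ev_contract: "\<forall>(c, w)\<in>set a. w \<noteq> [] \<Longrightarrow> ev (contract \<phi> a) L = ev a (\<phi> # L)"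
  unfolding contract_def lin_ext_def
  by (intro arg_cong[where f = sum_list]) (auto simp: word_eval_def neq_Nil_conv mult.assoc)

lemma perm_invariant_contract:
  assumes "lin_fun smul Bd d \<phi>" "\<forall>(c, w)\<in>set a. w \<noteq> []" "perm_invariant smul Bd d a"
  shows "perm_invariant smul Bd d (contract \<phi> a)"
  using assms unfolding perm_invariant_def
  by (simp add: ev_contract)

lemma sum_symmetrize_contract:
  assumes "\<forall>(c, w)\<in>set a. w \<noteq> []"
  shows "(\<Sum>(c, w)\<leftarrow>a. c * ev (symmetrize w) L) =
    (\<Sum>j<length L. \<Sum>(c, w)\<leftarrow>contract (L ! j) a. c * ev (symmetrize w) (remove_nth j L))"
proof -
  have "(\<Sum>(c, w)\<leftarrow>a. c * ev (symmetrize w) L) = (\<Sum>p\<leftarrow>a. \<Sum>j<length L.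
      fst p * (L ! j) (hd (snd p)) * ev (symmetrize (tl (snd p))) (remove_nth j L))"
    using assms
    by (intro arg_cong[where f = sum_list] map_cong refl)
      (auto simp: neq_Nil_conv ev_shuf_letter sum_distrib_left mult.assoc)
  also have "\<dots> = (\<Sum>j<length L. \<Sum>(c, w)\<leftarrow>contract (L ! j) a. c * ev (symmetrize w) (remove_nth j L))"
    by (simp add: sum_list_sum_swap contract_def split_def o_def)
  finally show ?thesis .
qed

lemma sum_symmetrize_eq_fact:
  "\<forall>(c, w)\<in>set a. length w = N \<Longrightarrow> perm_invariant smul Bd d a \<Longrightarrow> lin_funs smul Bd d L \<Longrightarrow>
   (\<Sum>(c, w)\<leftarrow>a. c * ev (symmetrize w) L) = fact N * ev a L"
proof (induction N arbitrary: a L)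
  case 0
  then have "\<forall>(c, w)\<in>set a. w = []"
    by auto
  then show ?case
    by (induction a) (auto simp: distrib_left)
next
  case (Suc N)
  have nonempty: "\<forall>(c, w)\<in>set a. w \<noteq> []"
    using Suc.prems(1) by auto
  have "(\<Sum>(c, w)\<leftarrow>contract (L ! j) a. c * ev (symmetrize w) (remove_nth j L)) = fact N * ev a L"
    if j: "j < length L" for j
  proof -
    have "\<forall>(c, w)\<in>set (contract (L ! j) a). length w = N"
      using Suc.prems(1) by (auto simp: contract_def)
    moreover have "perm_invariant smul Bd d (contract (L ! j) a)"
      using Suc.prems j nonempty by (intro perm_invariant_contract) (auto simp: lin_funs_def)
    moreover have "lin_funs smul Bd d (remove_nth j L)"
      using Suc.prems(3) set_remove_nth by (rule lin_funs_subset)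
    ultimately have "(\<Sum>(c, w)\<leftarrow>contract (L ! j) a. c * ev (symmetrize w) (remove_nth j L)) =
        fact N * ev (contract (L ! j) a) (remove_nth j L)"
      by (rule Suc.IH)
    also have "\<dots> = fact N * ev a (L ! j # remove_nth j L)"
      by (simp add: ev_contract[OF nonempty])
    also have "\<dots> = fact N * ev a L"
      using perm_invariantD[OF Suc.prems(2) _ mset_nth_remove_nth[OF j]] Suc.prems(3) j
        lin_funs_subset[OF Suc.prems(3) set_remove_nth] by (simp add: lin_funs_def)
    finally show ?thesis .
  qed
  then have "(\<Sum>(c, w)\<leftarrow>a. c * ev (symmetrize w) L) = of_nat (length L) * (fact N * ev a L)"
    by (simp add: sum_symmetrize_contract[OF nonempty])
  also have "\<dots> = fact (Suc N) * ev a L"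
    using ev_eq_0_if_length_ne[OF Suc.prems(1)] by (cases "length L = Suc N") (simp_all add: algebra_simps)
  finally show ?case .
qed

lemma ev_shuf_append:
  "ev (shuf S T) (L1 @ L2) =
   (\<Sum>bs1\<leftarrow>List.n_lists (length L1) [True, False]. \<Sum>bs2\<leftarrow>List.n_lists (length L2) [True, False].
     ev S (pick L1 bs1 True @ pick L2 bs2 True) * ev T (pick L1 bs1 False @ pick L2 bs2 False))"
  unfolding ev_shuf length_append sum_n_lists_add
  by (intro arg_cong[where f = sum_list] map_cong refl) (simp add: pick_append length_n_lists_elem)

definition symmetrization :: "nat \<Rightarrow> ('k::field_char_0, 'b) tens \<Rightarrow> ('k, 'b) tens" where
  "symmetrization N a = concat (map (\<lambda>(c, w). scale_t (c / fact N) (symmetrize w)) a)"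

lemma Sym_symmetrization:
  "\<forall>(c, w)\<in>set a. length w = N \<and> set w \<subseteq> Bd d \<Longrightarrow> symmetrization N a \<in> Sym smul Bd d N"
  by (induction a) (auto simp: symmetrization_def Sym_Nil intro!: Sym_append Sym_scale_t dest: Sym_symmetrize)

lemma ev_symmetrization:
  "ev (symmetrization N a) L = (\<Sum>(c, w)\<leftarrow>a. c * ev (symmetrize w) L) / fact N"
  by (induction a) (auto simp: symmetrization_def ev_scale_t add_divide_distrib)

lemma teq_symmetrization:
  fixes a :: "('k::field_char_0, 'b::comm_ring_1) tens"
  assumes "a \<in> Sym smul Bd d N"
  shows "teq smul Bd d N a (symmetrization N a)"
proof -
  have a: "tens_in Bd d N a" "perm_invariant smul Bd d a"
    using assms by (simp_all add: Sym_iff_perm_invariant)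
  have lengths: "\<forall>(c, w)\<in>set a. length w = N"
    using a(1) by (auto simp: tens_in_def)
  have "symmetrization N a \<in> Sym smul Bd d N"
    using a(1) by (intro Sym_symmetrization) (auto simp: tens_in_def)
  then show ?thesis
    unfolding teq_iff_ev
  proof (intro conjI allI impI)
    fix L assume "lin_funs smul Bd d L"
    then show "ev a L = ev (symmetrization N a) L"
      using sum_symmetrize_eq_fact[OF lengths a(2)] by (simp add: ev_symmetrization)
  qed (simp_all add: a(1) Sym_iff_perm_invariant)
qed

section \<open>The coproduct of a symmetric tensor\<close>

context
  fixes smul :: "'k::field_char_0 \<Rightarrow> 'b::comm_ring_1 \<Rightarrow> 'b" and Bd D
  assumes Delta: "is_Delta smul Bd D"
begin

lemma Delta_tens2_in: "t \<in> Sym smul Bd d n \<Longrightarrow> tens2_in Bd d (D t)"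
  using Delta unfolding is_Delta_def by blast

lemma Delta_cong:
  "s \<in> Sym smul Bd d n \<Longrightarrow> t \<in> Sym smul Bd d n \<Longrightarrow> teq smul Bd d n s t \<Longrightarrow> teq2 smul Bd d (D s) (D t)"
  using Delta unfolding is_Delta_def by blast

lemma Delta_append:
  "s \<in> Sym smul Bd d n \<Longrightarrow> t \<in> Sym smul Bd d n \<Longrightarrow> teq2 smul Bd d (D (s @ t)) (D s @ D t)"
  using Delta unfolding is_Delta_def by blast

lemma Delta_scale_t: "t \<in> Sym smul Bd d n \<Longrightarrow> teq2 smul Bd d (D (scale_t c t)) (scale_t2 c (D t))"
  using Delta unfolding is_Delta_def by blast

lemma Delta_unit: "teq2 smul Bd d (D [(1, [])]) [(1, [], [])]"
  using Delta unfolding is_Delta_def by blast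

lemma Delta_letter: "x \<in> Bd d \<Longrightarrow> teq2 smul Bd d (D [(1, [x])]) [(1, [], [x]), (1, [x], [])]"
  using Delta unfolding is_Delta_def by blast

lemma Delta_shuf:
  "s \<in> Sym smul Bd d n \<Longrightarrow> t \<in> Sym smul Bd d n' \<Longrightarrow> teq2 smul Bd d (D (shuf s t)) (mult2 (D s) (D t))"
  using Delta unfolding is_Delta_def by blast

lemma ev2_Delta_symmetrize:
  "set w \<subseteq> Bd d \<Longrightarrow> lin_funs smul Bd d L1 \<Longrightarrow> lin_funs smul Bd d L2 \<Longrightarrow>
   ev2 (D (symmetrize w)) L1 L2 = ev (symmetrize w) (L1 @ L2)"
proof (induction w arbitrary: L1 L2)
  case Nil
  then show ?case
    using teq2_imp_ev2_eq[OF Delta_unit] by (simp add: word_eval_def)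
next
  case (Cons x w)
  let ?N = "\<lambda>L. List.n_lists (length L) [True, False]"
  have x: "x \<in> Bd d" and w: "set w \<subseteq> Bd d"
    using Cons.prems(1) by simp_all
  have letter: "ev2 (D [(1, [x])]) A B = ev [(1, [x])] (A @ B)"
    if "lin_funs smul Bd d A" "lin_funs smul Bd d B" for A B
    using teq2_imp_ev2_eq[OF Delta_letter[OF x] that]
    by (cases A; cases B) (auto simp: word_eval_def)
  have "ev2 (D (symmetrize (x # w))) L1 L2 = ev2 (mult2 (D [(1, [x])]) (D (symmetrize w))) L1 L2"
    using teq2_imp_ev2_eq[OF Delta_shuf[OF Sym_letter[where Bd = Bd and d = d, OF x] Sym_symmetrize[where Bd = Bd and d = d, OF w]] Cons.prems(2,3)]
    by simp
  also have "\<dots> = (\<Sum>bs1\<leftarrow>?N L1. \<Sum>bs2\<leftarrow>?N L2.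
      ev [(1, [x])] (pick L1 bs1 True @ pick L2 bs2 True) *
      ev (symmetrize w) (pick L1 bs1 False @ pick L2 bs2 False))"
    using Cons.prems(2,3) by (simp add: ev2_mult2 letter Cons.IH[OF w] lin_funs_pick)
  also have "\<dots> = ev (symmetrize (x # w)) (L1 @ L2)"
    by (simp add: ev_shuf_append)
  finally show ?case .
qed

lemma ev2_Delta_symmetrization:
  "\<forall>(c, w)\<in>set a. length w = N \<and> set w \<subseteq> Bd d \<Longrightarrow> lin_funs smul Bd d L1 \<Longrightarrow> lin_funs smul Bd d L2 \<Longrightarrow>
   ev2 (D (symmetrization N a)) L1 L2 = ev (symmetrization N a) (L1 @ L2)"
proof (induction a)
  case Nil
  then show ?case
    using teq2_imp_ev2_eq[OF Delta_append[OF Sym_Nil Sym_Nil]] by (simp add: symmetrization_def)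
next
  case (Cons cw a)
  obtain c w where cw: "cw = (c, w)" by (cases cw)
  have w: "set w \<subseteq> Bd d" "symmetrize w \<in> Sym smul Bd d N"
    using Cons.prems(1) Sym_symmetrize[of w] by (auto simp: cw)
  have a: "symmetrization N a \<in> Sym smul Bd d N"
    using Cons.prems(1) by (intro Sym_symmetrization) auto
  have "symmetrization N (cw # a) = scale_t (c / fact N) (symmetrize w) @ symmetrization N a"
    by (simp add: symmetrization_def cw)
  then have "ev2 (D (symmetrization N (cw # a))) L1 L2 =
      ev2 (D (scale_t (c / fact N) (symmetrize w))) L1 L2 + ev2 (D (symmetrization N a)) L1 L2"
    using teq2_imp_ev2_eq[OF Delta_append[OF Sym_scale_t[OF w(2)] a] Cons.prems(2,3)] by simp
  also have "\<dots> = c / fact N * ev (symmetrize w) (L1 @ L2) + ev (symmetrization N a) (L1 @ L2)"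
    using teq2_imp_ev2_eq[OF Delta_scale_t[OF w(2)] Cons.prems(2,3)] Cons
    by (simp add: ev2_scale_t2 ev2_Delta_symmetrize[OF w(1)])
  also have "\<dots> = ev (symmetrization N (cw # a)) (L1 @ L2)"
    by (simp add: symmetrization_def cw ev_scale_t)
  finally show ?case .
qed

lemma ev2_Delta:
  assumes "a \<in> Sym smul Bd d N" "lin_funs smul Bd d L1" "lin_funs smul Bd d L2"
  shows "ev2 (D a) L1 L2 = ev a (L1 @ L2)"
proof -
  have a: "tens_in Bd d N a" "perm_invariant smul Bd d a"
    using assms(1) by (simp_all add: Sym_iff_perm_invariant)
  then have words: "\<forall>(c, w)\<in>set a. length w = N \<and> set w \<subseteq> Bd d"
    by (auto simp: tens_in_def)
  have "ev2 (D a) L1 L2 = ev2 (D (symmetrization N a)) L1 L2"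
    using Delta_cong[OF assms(1) Sym_symmetrization[where Bd = Bd and d = d, OF words] teq_symmetrization[OF assms(1)]]
      assms(2,3) by (rule teq2_imp_ev2_eq)
  also have "\<dots> = ev (symmetrization N a) (L1 @ L2)"
    using words assms(2,3) by (rule ev2_Delta_symmetrization)
  also have "\<dots> = ev a (L1 @ L2)"
    using sum_symmetrize_eq_fact[OF _ a(2), of N "L1 @ L2"] words assms(2,3)
    by (simp add: ev_symmetrization split_def)
  finally show ?thesis .
qed

end

section \<open>The factorwise product against the shuffle product\<close>

lemma graded_alg_mult: "graded_alg smul Bd \<Longrightarrow> x \<in> Bd i \<Longrightarrow> y \<in> Bd j \<Longrightarrow> x * y \<in> Bd (i + j)"
  unfolding graded_alg_def by simp

lemma graded_alg_smul_mult: "graded_alg smul Bd \<Longrightarrow> smul c (x * y) = smul c x * y"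
  unfolding graded_alg_def by simp

lemma lin_fun_mult_right:
  assumes G: "graded_alg smul Bd" and \<phi>: "lin_fun smul Bd (e + d) \<phi>" and y: "y \<in> Bd d"
  shows "lin_fun smul Bd e (\<lambda>x. \<phi> (x * y))"
  unfolding lin_fun_def
proof (intro conjI ballI allI)
  fix x x' assume "x \<in> Bd e" "x' \<in> Bd e"
  then show "\<phi> ((x + x') * y) = \<phi> (x * y) + \<phi> (x' * y)"
    using \<phi> graded_alg_mult[OF G _ y] unfolding lin_fun_def by (simp add: distrib_right)
next
  fix c x assume "x \<in> Bd e"
  then show "\<phi> (smul c x * y) = c * \<phi> (x * y)"
    using \<phi> graded_alg_mult[OF G _ y] graded_alg_smul_mult[OF G] unfolding lin_fun_def by metis
qed

lemma lin_funs_mult_funs: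
  "graded_alg smul Bd \<Longrightarrow> lin_funs smul Bd (e + d) L \<Longrightarrow> set z \<subseteq> Bd d \<Longrightarrow> lin_funs smul Bd e (mult_funs z L)"
  unfolding lin_funs_def mult_funs_def
  by (auto intro!: lin_fun_mult_right dest: set_zip_leftD set_zip_rightD)

lemma mset_mult_funs_merge:
  "count_list bs True = length u \<Longrightarrow> count_list bs False = length v \<Longrightarrow> length L = length bs \<Longrightarrow>
   mset (mult_funs (merge bs u v) L) = mset (mult_funs u (pick L bs True)) + mset (mult_funs v (pick L bs False))"
proof (induction bs u v arbitrary: L rule: merge.induct)
  case (2 bs x xs ys)
  then show ?case by (cases L) simp_all
next
  case (4 bs xs y ys)
  then show ?case by (cases L) simp_all
qed simp_all

lemma ev_mult_funs_merge:
  assumes G: "graded_alg smul Bd" and Delta: "is_Delta smul Bd D" and a: "a \<in> Sym smul Bd e N"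
    and L: "lin_funs smul Bd (e + d) L" "length L = length bs"
    and u: "set u \<subseteq> Bd d" "count_list bs True = length u"
    and v: "set v \<subseteq> Bd d" "count_list bs False = length v"
  shows "ev a (mult_funs (merge bs u v) L) = ev2 (D a) (mult_funs u (pick L bs True)) (mult_funs v (pick L bs False))"
proof -
  have "lin_funs smul Bd e (mult_funs (merge bs u v) L)"
    using lin_funs_mult_funs[OF G L(1)] set_merge[of bs u v] u v by blast
  then have "ev a (mult_funs (merge bs u v) L) = ev a (mult_funs u (pick L bs True) @ mult_funs v (pick L bs False))"
    using a mset_mult_funs_merge[OF u(2) v(2) L(2)]
    by (intro perm_invariantD) (simp_all add: Sym_iff_perm_invariant)
  also have "\<dots> = ev2 (D a) (mult_funs u (pick L bs True)) (mult_funs v (pick L bs False))"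
    using ev2_Delta[OF Delta a] lin_funs_mult_funs[OF G lin_funs_pick[OF L(1)]] u(1) v(1) by metis
  finally show ?thesis .
qed

lemma sum_sel_ev_mult_funs_merge:
  assumes G: "graded_alg smul Bd" and Delta: "is_Delta smul Bd D" and a: "a \<in> Sym smul Bd e N"
    and L: "lin_funs smul Bd (e + d) L" "length u + length v = length L"
    and uv: "set u \<subseteq> Bd d" "set v \<subseteq> Bd d"
  shows "(\<Sum>bs\<leftarrow>sel (length u) (length v).
      if length (merge bs u v) = length L then ev a (mult_funs (merge bs u v) L) else 0) =
    (\<Sum>bs\<leftarrow>List.n_lists (length L) [True, False].
      if length u = count_list bs True \<and> length v = count_list bs False
      then ev2 (D a) (mult_funs u (pick L bs True)) (mult_funs v (pick L bs False)) else 0)"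
  unfolding sel_def sum_list_map_filter' L(2)
proof (intro arg_cong[where f = sum_list] map_cong refl)
  fix bs assume "bs \<in> set (List.n_lists (length L) [True, False])"
  then have bs: "length bs = length L"
    by (rule length_n_lists_elem)
  show "(if count_list bs True = length u then
      if length (merge bs u v) = length L then ev a (mult_funs (merge bs u v) L) else 0 else 0) =
    (if length u = count_list bs True \<and> length v = count_list bs False
      then ev2 (D a) (mult_funs u (pick L bs True)) (mult_funs v (pick L bs False)) else 0)"
  proof (cases "count_list bs True = length u")
    case True
    moreover have "count_list bs False = length v"
      using True bs L(2) count_list_True_False[of bs] by simp
    ultimately show ?thesis
      using ev_mult_funs_merge[OF G Delta a L(1) bs[symmetric] uv(1) _ uv(2)] length_merge[of bs u v] bs
      by simp
  qed simp
qed

lemma ev_star_shuf_eq_ev_mu: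
  assumes G: "graded_alg smul Bd" and Delta: "is_Delta smul Bd D" and a: "a \<in> Sym smul Bd e N"
    and b: "tens_in Bd d m b" and f: "tens_in Bd d n f"
    and L: "lin_funs smul Bd (e + d) L" "length L = n + m"
  shows "ev (star a (shuf b f)) L = ev (mu (star2 (D a) b f)) L"
proof -
  let ?N = "List.n_lists (length L) [True, False]"
  let ?E = "\<lambda>bs u v. if length u = count_list bs True \<and> length v = count_list bs False
    then ev2 (D a) (mult_funs u (pick L bs True)) (mult_funs v (pick L bs False)) else 0"
  have "ev (star a (shuf b f)) L =
      lin_ext (\<lambda>z. if length z = length L then ev a (mult_funs z L) else 0) (shuf b f)"
    by (simp add: ev_star lin_ext_def[of _ "shuf b f"])
  also have "\<dots> = (\<Sum>x1\<leftarrow>b. \<Sum>x2\<leftarrow>f. fst x1 * fst x2 * (\<Sum>bs\<leftarrow>?N. ?E bs (snd x1) (snd x2)))"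
    unfolding lin_ext_shuf split_def using b f L
    by (intro arg_cong[where f = sum_list] map_cong refl)
      (subst sum_sel_ev_mult_funs_merge[OF G Delta a L(1)]; fastforce simp: tens_in_def)
  also have "\<dots> = (\<Sum>bs\<leftarrow>?N. \<Sum>x1\<leftarrow>b. \<Sum>x2\<leftarrow>f. fst x1 * fst x2 * ?E bs (snd x1) (snd x2))"
    by (simp only: sum_list_const_mult[symmetric] sum_list_swap[where ys = ?N])
  also have "\<dots> = ev (mu (star2 (D a) b f)) L"
    unfolding ev_mu ev2_star2 split_def
    by (intro arg_cong[where f = sum_list] map_cong refl) (simp add: length_pick length_n_lists_elem)
  finally show ?thesis .
qed

lemma tens_in_shuf:
  fixes s t :: "('k::times, 'b) tens"
  assumes "tens_in Bd d m s" "tens_in Bd d n t"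
  shows "tens_in Bd d (m + n) (shuf s t)"
  unfolding tens_in_def
proof clarify
  fix c z assume "(c, z) \<in> set (shuf s t)"
  then obtain c1 c2 :: 'k and u v where "(c1, u) \<in> set s" "(c2, v) \<in> set t"
    "length z = length u + length v" "set z \<subseteq> set u \<union> set v"
    by (rule shuf_words)
  with assms show "length z = m + n \<and> set z \<subseteq> Bd d"
    unfolding tens_in_def by fastforce
qed

lemma tens_in_star:
  assumes "graded_alg smul Bd" "\<forall>(c, w)\<in>set s. set w \<subseteq> Bd e" "tens_in Bd d n t"
  shows "tens_in Bd (e + d) n (star s t)"
  unfolding tens_in_def
proof clarify
  fix c z assume "(c, z) \<in> set (star s t)"
  then obtain c1 c2 w v where wv: "(c1, w) \<in> set s" "(c2, v) \<in> set t" "length w = length v"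
    and z: "z = map2 (*) w v"
    unfolding star_def by (auto split: if_splits)
  have "x * y \<in> Bd (e + d)" if "(x, y) \<in> set (zip w v)" for x y
    using assms wv that unfolding tens_in_def
    by (blast dest: set_zip_leftD set_zip_rightD intro: graded_alg_mult)
  with assms wv z show "length z = n \<and> set z \<subseteq> Bd (e + d)"
    unfolding tens_in_def by auto
qed

lemma tens_in_mu:
  assumes "\<forall>(c, u, v)\<in>set X. length u = m \<and> length v = n \<and> set u \<subseteq> Bd d \<and> set v \<subseteq> Bd d"
  shows "tens_in Bd d (m + n) (mu X)"
  unfolding tens_in_def[of Bd d "m + n"]
proof clarify
  fix c z assume "(c, z) \<in> set (mu X)"
  then obtain c' u v where "(c', u, v) \<in> set X" and z: "(c, z) \<in> set (shuf [(c', u)] [(1, v)])"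
    unfolding mu_def by auto
  with assms have "tens_in Bd d (m + n) (shuf [(c', u)] [(1, v)])"
    by (intro tens_in_shuf) (auto simp: tens_in_def)
  with z show "length z = m + n \<and> set z \<subseteq> Bd d"
    unfolding tens_in_def by blast
qed

lemma tens_in_mu_star2:
  assumes G: "graded_alg smul Bd" and "tens2_in Bd e Y" "tens_in Bd d m b" "tens_in Bd d n f"
  shows "tens_in Bd (e + d) (m + n) (mu (star2 Y b f))"
proof (rule tens_in_mu, clarify)
  fix c u v assume "(c, u, v) \<in> set (star2 Y b f)"
  then obtain c0 u0 v0 c1 c2 where "(c0, u0, v0) \<in> set Y"
    "(c1, u) \<in> set (star [(1, u0)] b)" "(c2, v) \<in> set (star [(1, v0)] f)"
    unfolding star2_def by fastforce
  then show "length u = m \<and> length v = n \<and> set u \<subseteq> Bd (e + d) \<and> set v \<subseteq> Bd (e + d)"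
    using tens_in_star[OF G _ assms(3), of "[(1, u0)]"] tens_in_star[OF G _ assms(4), of "[(1, v0)]"] assms(2)
    by (fastforce simp: tens2_in_def tens_in_def)
qed

theorem lemma3p5:
  fixes smul :: "'k::field_char_0 \<Rightarrow> 'b::comm_ring_1 \<Rightarrow> 'b"
    and Bd :: "nat \<Rightarrow> 'b set"
    and D :: "('k, 'b) tens \<Rightarrow> ('k, 'b) tens2"
    and f b a :: "('k, 'b) tens"
    and d e n m :: nat
  assumes "graded_alg smul Bd"
    and "is_Delta smul Bd D"
    and "f \<in> Sym smul Bd d n"
    and "b \<in> Sym smul Bd d m"
    and "a \<in> Sym smul Bd e (n + m)"
  shows "teq smul Bd (e + d) (n + m) (star a (shuf b f)) (mu (star2 (D a) b f))"
proof -
  have a: "tens_in Bd e (n + m) a" and b: "tens_in Bd d m b" and f: "tens_in Bd d n f"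
    using assms(3-5) by (simp_all add: Sym_def)
  have "tens_in Bd (e + d) (n + m) (star a (shuf b f))"
    using tens_in_star[OF assms(1) _ tens_in_shuf[OF b f]] a by (fastforce simp: tens_in_def add.commute)
  moreover have "tens_in Bd (e + d) (n + m) (mu (star2 (D a) b f))"
    using tens_in_mu_star2[OF assms(1) Delta_tens2_in[OF assms(2,5)] b f] by (simp add: add.commute)
  moreover have "ev (star a (shuf b f)) L = ev (mu (star2 (D a) b f)) L"
    if "lin_funs smul Bd (e + d) L" "length L = n + m" for L
    using ev_star_shuf_eq_ev_mu[OF assms(1,2,5) b f that] .
  ultimately show ?thesis
    by (simp add: teq_iff_ev)
qed

end
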